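(* Let $T\in\mathcal{B}(V)$ and $s\in\rho_S(T)$ such that $\|T-\mathrm{Re}[s]\mathcal{I}\|<|s-\mathrm{Re}[s]|$. Then $$S^{-1}(s,T)=\sum_{n\ge0}(T-\mathrm{Re}[s]\mathcal{I})^n\,(s-\mathrm{Re}[s])^{-n-1},$$ the series converging in operator norm.
   Context: $V$ is a bilateral quaternionic Banach space: a real Banach space which is both a left and a right $\mathbb{H}$-vector space with $(av)b=a(vb)$ and $\|av\|=\|va\|=|a|\|v\|$. $\mathcal{B}(V)$ is the space of bounded right-linear operators on $V$; products denote composition, $\mathcal{I}$ is the identity. For $a\in\mathbb{H}$, $a\mathcal{I}$ is $v\mapsto av$, $aT:=(a\mathcal{I})T$, $Ta:=T(a\mathcal{I})$ (so $A^n b$ means $v\mapsto A^n(bv)$). $\sigma_S(T)=\{s: T^2-2\mathrm{Re}[s]T+|s|^2\mathcal{I}$ not invertible in $\mathcal{B}(V)\}$, $\rho_S(T)=\mathbb{H}\setminus\sigma_S(T)$, and for $s\in\rho_S(T)$, $S^{-1}(s,T)=-(T^2-2\mathrm{Re}[s]T+|s|^2\mathcal{I})^{-1}(T-\bar s\mathcal{I})$. *)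

theory Defs
  imports "HOL-Analysis.Analysis"
begin

datatype quat = Quat (qRe: real) (qI: real) (qJ: real) (qK: real)

lemma quat_eq_iff: "x = y \<longleftrightarrow> qRe x = qRe y \<and> qI x = qI y \<and> qJ x = qJ y \<and> qK x = qK y"
  by (cases x; cases y) auto

lemma quat_eqI [intro?]: "qRe x = qRe y \<Longrightarrow> qI x = qI y \<Longrightarrow> qJ x = qJ y \<Longrightarrow> qK x = qK y \<Longrightarrow> x = y"
  by (simp add: quat_eq_iff)

instantiation quat :: ab_group_add
begin
definition "0 = Quat 0 0 0 0"
definition "x + y = Quat (qRe x + qRe y) (qI x + qI y) (qJ x + qJ y) (qK x + qK y)"
definition "- x = Quat (- qRe x) (- qI x) (- qJ x) (- qK x)"
definition "x - y = Quat (qRe x - qRe y) (qI x - qI y) (qJ x - qJ y) (qK x - qK y)"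
instance
  by standard (simp_all add: zero_quat_def plus_quat_def uminus_quat_def minus_quat_def quat_eq_iff)
end

lemma quat_add_sel [simp]:
  "qRe (x + y) = qRe x + qRe y" "qI (x + y) = qI x + qI y"
  "qJ (x + y) = qJ x + qJ y" "qK (x + y) = qK x + qK y"
  "qRe (x - y) = qRe x - qRe y" "qI (x - y) = qI x - qI y"
  "qJ (x - y) = qJ x - qJ y" "qK (x - y) = qK x - qK y"
  "qRe (- x) = - qRe x" "qI (- x) = - qI x" "qJ (- x) = - qJ x" "qK (- x) = - qK x"
  "qRe 0 = 0" "qI 0 = 0" "qJ 0 = 0" "qK 0 = 0"
  by (simp_all add: zero_quat_def plus_quat_def uminus_quat_def minus_quat_def)

instantiation quat :: ring_1
begin
definition "(1::quat) = Quat 1 0 0 0"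
definition "(x::quat) * y = Quat
  (qRe x * qRe y - qI x * qI y - qJ x * qJ y - qK x * qK y)
  (qRe x * qI y + qI x * qRe y + qJ x * qK y - qK x * qJ y)
  (qRe x * qJ y - qI x * qK y + qJ x * qRe y + qK x * qI y)
  (qRe x * qK y + qI x * qJ y - qJ x * qI y + qK x * qRe y)"
instance
proof
  fix a b c :: quat
  show "a * b * c = a * (b * c)" by (simp add: times_quat_def quat_eq_iff algebra_simps)
  show "1 * a = a" by (simp add: times_quat_def one_quat_def quat_eq_iff)
  show "a * 1 = a" by (simp add: times_quat_def one_quat_def quat_eq_iff)
  show "(a + b) * c = a * c + b * c" by (simp add: times_quat_def quat_eq_iff algebra_simps)
  show "a * (b + c) = a * b + a * c" by (simp add: times_quat_def quat_eq_iff algebra_simps)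
  show "(0::quat) \<noteq> 1" by (simp add: one_quat_def quat_eq_iff)
qed
end

definition qinv :: "quat \<Rightarrow> quat" where
  "qinv x = (let n = (qRe x)\<^sup>2 + (qI x)\<^sup>2 + (qJ x)\<^sup>2 + (qK x)\<^sup>2 in
  Quat (qRe x / n) (- qI x / n) (- qJ x / n) (- qK x / n))"

instantiation quat :: division_ring
begin
definition "inverse (x::quat) = qinv x"
definition "divide (x::quat) y = x * qinv y"

lemma quat_nz_sumsq:
  assumes "(x::quat) \<noteq> 0"
  shows "(qRe x)\<^sup>2 + (qI x)\<^sup>2 + (qJ x)\<^sup>2 + (qK x)\<^sup>2 \<noteq> 0"
  using assms by (simp add: quat_eq_iff add_nonneg_eq_0_iff)

lemma quat_inv_left: "(a::quat) \<noteq> 0 \<Longrightarrow> times (qinv a) a = 1"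
proof -
  assume "a \<noteq> 0"
  define N where "N = (qRe a)\<^sup>2 + (qI a)\<^sup>2 + (qJ a)\<^sup>2 + (qK a)\<^sup>2"
  have N0: "N \<noteq> 0" using quat_nz_sumsq[OF \<open>a \<noteq> 0\<close>] by (simp add: N_def)
  have NN: "qRe a * qRe a + qI a * qI a + qJ a * qJ a + qK a * qK a = N"
    by (simp add: N_def power2_eq_square)
  show ?thesis
    unfolding qinv_def Let_def N_def[symmetric] times_quat_def one_quat_def quat_eq_iff
    using N0 NN by (simp add: divide_simps)
qed

lemma quat_inv_right: "(a::quat) \<noteq> 0 \<Longrightarrow> times a (qinv a) = 1"
proof -
  assume "a \<noteq> 0"
  define N where "N = (qRe a)\<^sup>2 + (qI a)\<^sup>2 + (qJ a)\<^sup>2 + (qK a)\<^sup>2"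
  have N0: "N \<noteq> 0" using quat_nz_sumsq[OF \<open>a \<noteq> 0\<close>] by (simp add: N_def)
  have NN: "qRe a * qRe a + qI a * qI a + qJ a * qJ a + qK a * qK a = N"
    by (simp add: N_def power2_eq_square)
  show ?thesis
    unfolding qinv_def Let_def N_def[symmetric] times_quat_def one_quat_def quat_eq_iff
    using N0 NN by (simp add: divide_simps)
qed

instance
  by standard (simp_all add: inverse_quat_def divide_quat_def quat_inv_left quat_inv_right,
      simp add: qinv_def quat_eq_iff Let_def)
end

instantiation quat :: real_div_algebra
begin
definition "scaleR r (x::quat) = Quat (r * qRe x) (r * qI x) (r * qJ x) (r * qK x)"
instance
proof
  fix r s :: real and x y :: quat
  show "scaleR r (x + y) = scaleR r x + scaleR r y"
    by (simp add: scaleR_quat_def quat_eq_iff algebra_simps)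
  show "scaleR (r + s) x = scaleR r x + scaleR s x"
    by (simp add: scaleR_quat_def quat_eq_iff algebra_simps)
  show "scaleR r (scaleR s x) = scaleR (r * s) x"
    by (simp add: scaleR_quat_def quat_eq_iff algebra_simps)
  show "scaleR 1 x = x" by (simp add: scaleR_quat_def quat_eq_iff)
  show "scaleR r x * y = scaleR r (x * y)"
    by (simp add: scaleR_quat_def times_quat_def quat_eq_iff algebra_simps)
  show "x * scaleR r y = scaleR r (x * y)"
    by (simp add: scaleR_quat_def times_quat_def quat_eq_iff algebra_simps)
qed
end

instantiation quat :: real_normed_div_algebra
begin
definition "norm (x::quat) = sqrt ((qRe x)\<^sup>2 + (qI x)\<^sup>2 + (qJ x)\<^sup>2 + (qK x)\<^sup>2)"
definition quat_sgn_def: "sgn (x::quat) = x /\<^sub>R norm x"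
definition dist_quat_def: "dist (x::quat) y = norm (x - y)"
definition uniformity_quat_def [code del]:
  "(uniformity :: (quat \<times> quat) filter) = (INF e\<in>{0 <..}. principal {(x, y). dist x y < e})"
definition open_quat_def [code del]:
  "open (U :: quat set) \<longleftrightarrow> (\<forall>x\<in>U. eventually (\<lambda>(x', y). x' = x \<longrightarrow> y \<in> U) uniformity)"

lemma norm_quat_tuple: "norm (x::quat) = norm (qRe x, qI x, qJ x, qK x)"
  by (simp add: norm_quat_def norm_Pair add.assoc)

instance
proof
  fix r :: real and x y :: quat
  show "(norm x = 0) = (x = 0)"
    by (simp add: norm_quat_def quat_eq_iff add_nonneg_eq_0_iff)
  show "norm (x + y) \<le> norm x + norm y"
    using norm_triangle_ineq[of "(qRe x, qI x, qJ x, qK x)" "(qRe y, qI y, qJ y, qK y)"]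
    by (simp add: norm_quat_tuple)
  show "norm (scaleR r x) = \<bar>r\<bar> * norm x"
    by (simp add: norm_quat_def scaleR_quat_def power_mult_distrib
        distrib_left [symmetric] real_sqrt_mult)
  show "norm (x * y) = norm x * norm y"
    by (simp add: norm_quat_def times_quat_def real_sqrt_mult [symmetric]
        power2_eq_square algebra_simps)
qed (rule quat_sgn_def dist_quat_def open_quat_def uniformity_quat_def)+
end

definition qcnj :: "quat \<Rightarrow> quat" where
  "qcnj x = Quat (qRe x) (- qI x) (- qJ x) (- qK x)"

text \<open>A real Banach space of type v together with a left action lm (a v = lm a v)
  and a right action rm (v a = rm v a) of the quaternions, compatible with the real
  structure, with (a v) b = a (v b) and norm (a v) = norm (v a) = |a| norm v.\<close>

definition bilateral_qbanach :: "(quat \<Rightarrow> 'v::banach \<Rightarrow> 'v) \<Rightarrow> ('v \<Rightarrow> quat \<Rightarrow> 'v) \<Rightarrow> bool" where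
  "bilateral_qbanach lm rm \<longleftrightarrow>
     (\<forall>a v w. lm a (v + w) = lm a v + lm a w) \<and>
     (\<forall>a b v. lm (a + b) v = lm a v + lm b v) \<and>
     (\<forall>a b v. lm (a * b) v = lm a (lm b v)) \<and>
     (\<forall>r v. lm (of_real r) v = r *\<^sub>R v) \<and>
     (\<forall>a v w. rm (v + w) a = rm v a + rm w a) \<and>
     (\<forall>a b v. rm v (a + b) = rm v a + rm v b) \<and>
     (\<forall>a b v. rm v (a * b) = rm (rm v a) b) \<and>
     (\<forall>r v. rm v (of_real r) = r *\<^sub>R v) \<and>
     (\<forall>a b v. rm (lm a v) b = lm a (rm v b)) \<and>
     (\<forall>a v. norm (lm a v) = norm a * norm v) \<and>
     (\<forall>a v. norm (rm v a) = norm a * norm v)"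

text \<open>Bounded right-linear operators, i.e. the elements of B(V).\<close>
definition qbop :: "('v::real_normed_vector \<Rightarrow> quat \<Rightarrow> 'v) \<Rightarrow> ('v \<Rightarrow> 'v) \<Rightarrow> bool" where
  "qbop rm T \<longleftrightarrow> bounded_linear T \<and> (\<forall>v a. T (rm v a) = rm (T v) a)"

definition Qop :: "quat \<Rightarrow> ('v::real_normed_vector \<Rightarrow> 'v) \<Rightarrow> 'v \<Rightarrow> 'v" where
  "Qop s T = (\<lambda>v. T (T v) - (2 * qRe s) *\<^sub>R T v + (norm s)\<^sup>2 *\<^sub>R v)"

definition qinvertible :: "('v::real_normed_vector \<Rightarrow> quat \<Rightarrow> 'v) \<Rightarrow> ('v \<Rightarrow> 'v) \<Rightarrow> bool" where
  "qinvertible rm A \<longleftrightarrow> (\<exists>B. qbop rm B \<and> B \<circ> A = id \<and> A \<circ> B = id)"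

definition S_spectrum :: "('v::real_normed_vector \<Rightarrow> quat \<Rightarrow> 'v) \<Rightarrow> ('v \<Rightarrow> 'v) \<Rightarrow> quat set" where
  "S_spectrum rm T = {s. \<not> qinvertible rm (Qop s T)}"

definition S_resolvent_set :: "('v::real_normed_vector \<Rightarrow> quat \<Rightarrow> 'v) \<Rightarrow> ('v \<Rightarrow> 'v) \<Rightarrow> quat set" where
  "S_resolvent_set rm T = UNIV - S_spectrum rm T"

definition S_resolvent :: "(quat \<Rightarrow> 'v::real_normed_vector \<Rightarrow> 'v) \<Rightarrow> quat \<Rightarrow> ('v \<Rightarrow> 'v) \<Rightarrow> 'v \<Rightarrow> 'v" where
  "S_resolvent lm s T = (\<lambda>v. - (inv (Qop s T)) (T v - lm (qcnj s) v))"

end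

theory Submission
  imports Defs
begin

(* Write a = Re[s], b = s - a (a purely imaginary quaternion, so b^2 = -|b|^2) and
   A = T - a I.  Then Q_s(T) = A^2 + |b|^2 I and T - conj(s) I = A + b I. *)

lemma quat_of_real: "(of_real r :: quat) = Quat r 0 0 0"
  by (simp add: of_real_def scaleR_quat_def one_quat_def)

lemma quat_of_real_commute: "(of_real r :: quat) * x = x * of_real r"
  by (simp add: quat_of_real times_quat_def quat_eq_iff)

lemma qRe_imag_part: "qRe (s - of_real (qRe s)) = 0"
  by (simp add: quat_of_real)

lemma qcnj_split: "qcnj s = of_real (qRe s) - (s - of_real (qRe s))"
  by (simp add: qcnj_def quat_of_real quat_eq_iff)

lemma quat_norm_sq_split: "(norm s)\<^sup>2 = (qRe s)\<^sup>2 + (norm (s - of_real (qRe s)))\<^sup>2"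
  by (simp add: norm_quat_def quat_of_real)

lemma quat_imag_norm_sq_inverse:
  assumes "qRe b = 0"
  shows "of_real ((norm b)\<^sup>2) * inverse b = - b"
proof (cases "b = 0")
  case False
  then have "(norm b)\<^sup>2 \<noteq> 0" by simp
  then show ?thesis
    using assms by (simp add: inverse_quat_def qinv_def quat_of_real times_quat_def
        quat_eq_iff norm_quat_def Let_def field_simps)
qed simp

text \<open>Consequently \<open>b\<^sup>-\<^sup>(\<^sup>n\<^sup>+\<^sup>1\<^sup>) = -|b|\<^sup>2 b\<^sup>-\<^sup>(\<^sup>n\<^sup>+\<^sup>3\<^sup>)\<close>, the recursion behind the telescoping.\<close>
lemma quat_imag_inverse_power_step:
  assumes "qRe b = 0" and "b \<noteq> 0"
  shows "of_real ((norm b)\<^sup>2) * inverse (b ^ Suc (Suc n)) = - inverse (b ^ n)"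
proof -
  have "of_real ((norm b)\<^sup>2) * inverse (b ^ Suc (Suc n))
      = (of_real ((norm b)\<^sup>2) * inverse b) * inverse b * inverse b ^ n"
    unfolding power_inverse[symmetric] by (simp add: mult.assoc)
  also have "\<dots> = - inverse (b ^ n)"
    by (subst quat_imag_norm_sq_inverse[OF assms(1)]) (simp add: assms(2) power_inverse)
  finally show ?thesis .
qed

lemma bounded_linear_funpow:
  "bounded_linear (A :: 'a::real_normed_vector \<Rightarrow> 'a) \<Longrightarrow> bounded_linear (A ^^ n)"
proof (induction n)
  case 0
  then show ?case by (simp add: id_def bounded_linear_ident)
next
  case (Suc n)
  then show ?case using bounded_linear_compose[of A "A ^^ n"] by (simp add: o_def)
qed

lemma onorm_funpow_le:
  "bounded_linear (A :: 'a::real_normed_vector \<Rightarrow> 'a) \<Longrightarrow> onorm (A ^^ n) \<le> onorm A ^ n"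
proof (induction n)
  case 0
  then show ?case using onorm_id_le by (simp add: id_def)
next
  case (Suc n)
  have "onorm (A ^^ Suc n) = onorm (A \<circ> A ^^ n)" by simp
  also have "\<dots> \<le> onorm A * onorm (A ^^ n)"
    using Suc by (intro onorm_compose bounded_linear_funpow)
  also have "\<dots> \<le> onorm A * onorm A ^ n"
    using Suc by (intro mult_left_mono onorm_pos_le)
  finally show ?case by (simp only: power_Suc)
qed

lemma sums_telescope_two:
  fixes g :: "nat \<Rightarrow> 'a::real_normed_vector"
  assumes "g sums l"
  shows "(\<lambda>n. g n - g (Suc (Suc n))) sums (g 0 + g 1)"
proof -
  have "(\<lambda>n. g (n + 2)) sums (l - (g 0 + g 1))"
    using assms sums_iff_shift[of g 2 "l - (g 0 + g 1)"] by (simp add: numeral_2_eq_2)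
  from sums_diff[OF assms this] show ?thesis by (simp add: add.commute)
qed

text \<open>The part of the bilateral structure the series expansion uses: a left action
  of the quaternions that is additive, associative, extends real scaling and is
  isometric up to the factor \<open>|a|\<close>.\<close>
locale left_quat_action =
  fixes lm :: "quat \<Rightarrow> 'v::banach \<Rightarrow> 'v"
  assumes lm_add_right: "lm a (v + w) = lm a v + lm a w"
    and lm_add_left: "lm (a + b) v = lm a v + lm b v"
    and lm_mult: "lm (a * b) v = lm a (lm b v)"
    and lm_of_real: "lm (of_real r) v = r *\<^sub>R v"
    and lm_norm: "norm (lm a v) = norm a * norm v"

lemma bilateral_qbanach_left_action:
  "bilateral_qbanach lm rm \<Longrightarrow> left_quat_action lm"
  by unfold_locales (simp_all add: bilateral_qbanach_def)

context left_quat_action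
begin

lemma lm_diff_left: "lm (a - b) v = lm a v - lm b v"
  using lm_add_left[of "a - b" b v] by (simp add: algebra_simps)

lemma lm_minus_left: "lm (- a) v = - lm a v"
  using lm_diff_left[of 0 a v] lm_of_real[of 0 v] by simp

lemma lm_scaleR: "lm a (r *\<^sub>R v) = r *\<^sub>R lm a v"
  by (metis lm_mult lm_of_real quat_of_real_commute)

lemma lm_real_mult: "lm (of_real r * a) v = r *\<^sub>R lm a v"
  by (simp add: lm_mult lm_of_real)

lemma bounded_linear_lm: "bounded_linear (lm a)"
  by (rule bounded_linear_intro[where K = "norm a"]) (simp_all add: lm_add_right lm_scaleR lm_norm)

lemma onorm_lm_le: "onorm (lm a) \<le> norm a"
  by (rule onorm_bound) (simp_all add: lm_norm)

definition series_term :: "('v \<Rightarrow> 'v) \<Rightarrow> quat \<Rightarrow> nat \<Rightarrow> 'v \<Rightarrow>\<^sub>L 'v" where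
  "series_term A b = (\<lambda>n. Blinfun (\<lambda>v. (A ^^ n) (lm (inverse (b ^ Suc n)) v)))"

lemma series_term_apply:
  assumes "bounded_linear A"
  shows "blinfun_apply (series_term A b n) = (\<lambda>v. (A ^^ n) (lm (inverse (b ^ Suc n)) v))"
  unfolding series_term_def
  by (subst bounded_linear_Blinfun_apply)
    (simp_all add: bounded_linear_compose[OF bounded_linear_funpow[OF assms] bounded_linear_lm])

lemma norm_series_term_le:
  assumes A: "bounded_linear A"
  shows "norm (series_term A b n) \<le> inverse (norm b) * (onorm A / norm b) ^ n"
proof -
  have "norm (series_term A b n) = onorm ((A ^^ n) \<circ> lm (inverse (b ^ Suc n)))"
    by (simp add: norm_blinfun.rep_eq series_term_apply[OF A] o_def)
  also have "\<dots> \<le> onorm (A ^^ n) * onorm (lm (inverse (b ^ Suc n)))"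
    by (rule onorm_compose[OF bounded_linear_funpow[OF A] bounded_linear_lm])
  also have "\<dots> \<le> onorm A ^ n * norm (inverse (b ^ Suc n))"
    using A by (intro mult_mono onorm_funpow_le onorm_lm_le onorm_pos_le bounded_linear_lm)
      (simp_all add: onorm_pos_le)
  also have "norm (inverse (b ^ Suc n)) = inverse (norm b) ^ Suc n"
    by (simp add: norm_inverse norm_power power_inverse del: power_Suc)
  also have "onorm A ^ n * inverse (norm b) ^ Suc n = inverse (norm b) * (onorm A / norm b) ^ n"
    by (simp add: power_divide field_simps)
  finally show ?thesis .
qed

lemma summable_series_term:
  assumes A: "bounded_linear A" and small: "onorm A < norm b"
  shows "summable (series_term A b)"
proof (rule summable_comparison_test)
  show "\<exists>N. \<forall>n\<ge>N. norm (series_term A b n) \<le> inverse (norm b) * (onorm A / norm b) ^ n"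
    using norm_series_term_le[OF A] by blast
  have "0 \<le> onorm A" using onorm_pos_le[OF A] .
  then show "summable (\<lambda>n. inverse (norm b) * (onorm A / norm b) ^ n)"
    using small by (intro summable_mult summable_geometric) (auto simp: divide_less_eq)
qed

lemma series_term_sum_equation:
  assumes A: "bounded_linear A" and imag: "qRe b = 0" and nonzero: "b \<noteq> 0"
    and L: "series_term A b sums L"
  shows "A (A (L v)) + (norm b)\<^sup>2 *\<^sub>R L v = - (A v + lm b v)"
proof -
  define r where "r = (norm b)\<^sup>2"
  define g where "g = (\<lambda>n. (A ^^ n) (lm (inverse (b ^ Suc n)) v))"
  define Q where "Q x = A (A x) + r *\<^sub>R x" for x
  have linA: "linear (A ^^ n)" for n
    using bounded_linear_funpow[OF A] bounded_linear.linear by blast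
  have g_sums: "g sums L v"
    using bounded_linear.sums[OF blinfun.bounded_linear_left L, of v]
    unfolding g_def series_term_apply[OF A] .
  have Q_g: "Q (g n) = r *\<^sub>R (g n - g (Suc (Suc n)))" for n
  proof -
    have "A (A (g n)) = (A ^^ Suc (Suc n)) (lm (- (of_real r * inverse (b ^ Suc (Suc (Suc n))))) v)"
      using quat_imag_inverse_power_step[OF imag nonzero, of "Suc n"] by (simp add: g_def r_def)
    also have "\<dots> = - r *\<^sub>R g (Suc (Suc n))"
      by (simp add: lm_minus_left lm_real_mult g_def linear_neg[OF linA] linear_cmul[OF linA]
          linear_neg[OF bounded_linear.linear[OF A]] linear_cmul[OF bounded_linear.linear[OF A]])
    finally show ?thesis by (simp add: Q_def algebra_simps)
  qed
  have "bounded_linear Q"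
    unfolding Q_def
    by (intro bounded_linear_add bounded_linear_compose[OF A A] bounded_linear_scaleR_right
        bounded_linear_ident)
  from bounded_linear.sums[OF this g_sums]
  have "(\<lambda>n. r *\<^sub>R (g n - g (Suc (Suc n)))) sums Q (L v)"
    by (simp add: Q_g)
  moreover have "(\<lambda>n. r *\<^sub>R (g n - g (Suc (Suc n)))) sums (r *\<^sub>R (g 0 + g 1))"
    using sums_scaleR_right[OF sums_telescope_two[OF g_sums]] .
  ultimately have "Q (L v) = r *\<^sub>R g 0 + r *\<^sub>R g 1"
    using sums_unique2 scaleR_add_right by metis
  moreover have "r *\<^sub>R g 0 = - lm b v"
    using quat_imag_norm_sq_inverse[OF imag] by (simp add: g_def r_def lm_real_mult[symmetric] lm_minus_left)
  moreover have "r *\<^sub>R g 1 = - A v"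
  proof -
    have "r *\<^sub>R g 1 = A (lm (of_real r * inverse (b ^ Suc (Suc 0))) v)"
      by (simp add: g_def lm_real_mult linear_cmul[OF bounded_linear.linear[OF A]] del: power_Suc)
    also have "\<dots> = A (- v)"
      using quat_imag_inverse_power_step[OF imag nonzero, of 0]
      by (simp add: r_def lm_minus_left lm_of_real[of 1, simplified] del: power_Suc)
    finally show ?thesis by (simp add: linear_neg[OF bounded_linear.linear[OF A]])
  qed
  ultimately show ?thesis by (simp add: Q_def r_def)
qed

end


lemma bounded_linear_Qop: "bounded_linear T \<Longrightarrow> bounded_linear (Qop s T)"
  unfolding Qop_def
  by (intro bounded_linear_add bounded_linear_sub bounded_linear_scaleR_right bounded_linear_ident
      bounded_linear_compose[of T T] bounded_linear_compose[OF bounded_linear_scaleR_right])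

lemma Qop_shift:
  assumes "linear T"
  shows "Qop s T x = (T (T x - qRe s *\<^sub>R x) - qRe s *\<^sub>R (T x - qRe s *\<^sub>R x))
      + (norm (s - of_real (qRe s)))\<^sup>2 *\<^sub>R x"
  using quat_norm_sq_split[of s] scaleR_add_left[of "qRe s" "qRe s" "T x"]
  by (simp add: Qop_def linear_diff[OF assms] linear_cmul[OF assms] algebra_simps power2_eq_square)

text \<open>On the S-resolvent set \<open>Q\<^sub>s(T)\<close> is injective, so \<open>S\<^sup>-\<^sup>1(s,T) v\<close> is the unique
  solution \<open>x\<close> of \<open>Q\<^sub>s(T) x = -(T v - conj(s) v)\<close>.\<close>
lemma S_resolvent_eqI:
  assumes "s \<in> S_resolvent_set rm T" and "linear (Qop s T)"
    and "Qop s T x = - (T v - lm (qcnj s) v)"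
  shows "S_resolvent lm s T v = x"
proof -
  obtain B where "B \<circ> Qop s T = id"
    using assms(1) by (auto simp: S_resolvent_set_def S_spectrum_def qinvertible_def)
  then have inj: "inj (Qop s T)" by (metis inj_on_id inj_on_imageI2)
  have "Qop s T (- x) = T v - lm (qcnj s) v"
    using assms(3) linear_neg[OF assms(2)] by simp
  then show ?thesis
    unfolding S_resolvent_def using inv_f_f[OF inj] by (metis minus_minus)
qed

theorem theorem4p11:
  fixes lm :: "quat \<Rightarrow> 'v::banach \<Rightarrow> 'v" and rm :: "'v \<Rightarrow> quat \<Rightarrow> 'v"
    and T :: "'v \<Rightarrow> 'v" and s :: quat
  assumes "bilateral_qbanach lm rm"
    and "qbop rm T"
    and "s \<in> S_resolvent_set rm T"
    and "onorm (\<lambda>v. T v - qRe s *\<^sub>R v) < norm (s - of_real (qRe s))"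
  shows "(\<lambda>n. Blinfun (\<lambda>v. ((\<lambda>w. T w - qRe s *\<^sub>R w) ^^ n)
              (lm (inverse ((s - of_real (qRe s)) ^ Suc n)) v)))
           sums Blinfun (S_resolvent lm s T)"
proof -
  interpret left_quat_action lm using bilateral_qbanach_left_action[OF assms(1)] .
  define A where "A = (\<lambda>w. T w - qRe s *\<^sub>R w)"
  define b where "b = s - of_real (qRe s)"
  have T: "bounded_linear T" using assms(2) by (simp add: qbop_def)
  then have A: "bounded_linear A"
    unfolding A_def by (intro bounded_linear_sub bounded_linear_scaleR_right bounded_linear_ident)
  have linQ: "linear (Qop s T)" using bounded_linear_Qop[OF T] by (rule bounded_linear.linear)
  have imag: "qRe b = 0" unfolding b_def by (rule qRe_imag_part)
  have small: "onorm A < norm b" using assms(4) by (simp only: A_def b_def)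
  then have b: "b \<noteq> 0" using onorm_pos_le[OF A] by auto
  obtain L where L: "series_term A b sums L"
    using summable_series_term[OF A small] summable_sums by blast
  have Q: "Qop s T x = A (A x) + (norm b)\<^sup>2 *\<^sub>R x" for x
    using Qop_shift[OF bounded_linear.linear[OF T]] by (simp add: A_def b_def)
  have T_cnj: "T v - lm (qcnj s) v = A v + lm b v" for v
    by (simp add: qcnj_split lm_diff_left lm_of_real A_def b_def)
  have "S_resolvent lm s T v = L v" for v
    by (intro S_resolvent_eqI[OF assms(3) linQ])
      (simp only: Q T_cnj series_term_sum_equation[OF A imag b L])
  then have "Blinfun (S_resolvent lm s T) = L"
    by (metis blinfun_apply_inverse ext)
  with L show ?thesis by (simp only: series_term_def A_def b_def)
qed

end
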